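(* Let $k$ be a $\Delta=\{\partial_0,\ldots,\partial_m\}$-field and let $L$ be a parameterized liouvillian extension of $k$. Then $L=\bigcup_{i\in\mathbb N}L_i$ for a chain of fields $k=L_0\subset L_1\subset\cdots$ with $L_{i+1}=L_i(\{t_{i,j}\}_{j\in\mathbb N})$, where $\{t_{i,j}\}$ is a set of elements such that for each $j$ either $\partial_0t_{i,j}\in L_i$, or $t_{i,j}\ne0$ and $\partial_0t_{i,j}/t_{i,j}\in L_i$, or $t_{i,j}$ is algebraic over $L_i$.
   Context: All fields have characteristic zero. $C_L^0$ denotes the $\partial_0$-constants of $L$, and $L\langle t\rangle_\Delta$ the field generated over $L$ by $t$ and all its derivatives with respect to $\Delta$. A $\Delta$-field $L\supset k$ is a parameterized liouvillian extension of $k$ if $C_L^0=C_k^0$ and there is a tower of $\Delta$-fields $k=M_0\subset M_1\subset\cdots\subset M_r=L$ with $M_i=M_{i-1}\langle s_i\rangle_\Delta$ where for each $i$ either $\partial_0s_i\in M_{i-1}$, or $s_i\ne0$ and $\partial_0s_i/s_i\in M_{i-1}$, or $s_i$ is algebraic over $M_{i-1}$. *)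

theory Defs
  imports "HOL-Computational_Algebra.Polynomial"
begin

text \<open>Ambient type 'a is a field of characteristic zero; all fields considered are
subfields (carrier sets) of 'a. The family of derivations
Delta = {D 0, ..., D m} is given by D :: nat => 'a => 'a; D 0 plays the role of the
distinguished derivation partial_0.\<close>

definition subfield :: "'a::field set \<Rightarrow> bool" where
  "subfield F \<longleftrightarrow> 0 \<in> F \<and> 1 \<in> F \<and>
     (\<forall>x\<in>F. \<forall>y\<in>F. x + y \<in> F \<and> x * y \<in> F) \<and>
     (\<forall>x\<in>F. - x \<in> F \<and> inverse x \<in> F)"

definition delta_field :: "nat \<Rightarrow> (nat \<Rightarrow> 'a::field \<Rightarrow> 'a) \<Rightarrow> 'a set \<Rightarrow> bool" where
  "delta_field m D F \<longleftrightarrow> subfield F \<and>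
     (\<forall>i\<le>m. \<forall>x\<in>F. D i x \<in> F) \<and>
     (\<forall>i\<le>m. \<forall>x\<in>F. \<forall>y\<in>F. D i (x + y) = D i x + D i y \<and>
                           D i (x * y) = x * D i y + D i x * y) \<and>
     (\<forall>i\<le>m. \<forall>j\<le>m. \<forall>x\<in>F. D i (D j x) = D j (D i x))"

definition const0 :: "(nat \<Rightarrow> 'a::field \<Rightarrow> 'a) \<Rightarrow> 'a set \<Rightarrow> 'a set" where
  "const0 D F = {x \<in> F. D 0 x = 0}"

definition field_gen :: "'a::field set \<Rightarrow> 'a set \<Rightarrow> 'a set" where
  "field_gen M T = \<Inter>{F. subfield F \<and> M \<subseteq> F \<and> T \<subseteq> F}"

inductive_set derivs :: "nat \<Rightarrow> (nat \<Rightarrow> 'a \<Rightarrow> 'a) \<Rightarrow> 'a \<Rightarrow> 'a set"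
  for m D t where
  self: "t \<in> derivs m D t"
| step: "x \<in> derivs m D t \<Longrightarrow> i \<le> m \<Longrightarrow> D i x \<in> derivs m D t"

definition delta_gen :: "nat \<Rightarrow> (nat \<Rightarrow> 'a::field \<Rightarrow> 'a) \<Rightarrow> 'a set \<Rightarrow> 'a \<Rightarrow> 'a set" where
  "delta_gen m D M t = field_gen M (derivs m D t)"

definition algebraic_over :: "'a::field set \<Rightarrow> 'a \<Rightarrow> bool" where
  "algebraic_over M t \<longleftrightarrow> (\<exists>p. p \<noteq> 0 \<and> (\<forall>i. coeff p i \<in> M) \<and> poly p t = 0)"

definition liouv_elem :: "(nat \<Rightarrow> 'a::field \<Rightarrow> 'a) \<Rightarrow> 'a set \<Rightarrow> 'a \<Rightarrow> bool" where
  "liouv_elem D M s \<longleftrightarrow> D 0 s \<in> M \<or> (s \<noteq> 0 \<and> D 0 s / s \<in> M) \<or> algebraic_over M s"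

definition param_liouvillian ::
  "nat \<Rightarrow> (nat \<Rightarrow> 'a::field \<Rightarrow> 'a) \<Rightarrow> 'a set \<Rightarrow> 'a set \<Rightarrow> bool" where
  "param_liouvillian m D k L \<longleftrightarrow>
     delta_field m D L \<and> delta_field m D k \<and> k \<subseteq> L \<and>
     const0 D L = const0 D k \<and>
     (\<exists>r (Ms :: nat \<Rightarrow> 'a set) (s :: nat \<Rightarrow> 'a).
        Ms 0 = k \<and> Ms r = L \<and> (\<forall>i\<le>r. delta_field m D (Ms i)) \<and>
        (\<forall>i<r. Ms i \<subseteq> Ms (Suc i) \<and>
               Ms (Suc i) = delta_gen m D (Ms i) (s (Suc i)) \<and>
               liouv_elem D (Ms i) (s (Suc i))))"

end

theory Submission
  imports Defs "HOL-Library.Countable_Set"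
begin

text \<open>
  Each step \<open>M \<subset> M\<langle>s\<rangle>\<close> of the tower splits into at most two steps, each adjoining countably
  many elements liouvillian over the smaller field (an element has only countably many
  derivatives):
  \<^item> if \<open>\<partial>\<^sub>0 s \<in> M\<close>, then, since \<open>\<partial>\<^sub>0\<close> commutes with every \<open>\<partial>\<^sub>i\<close>, all derivatives \<open>x\<close> of \<open>s\<close> have
    \<open>\<partial>\<^sub>0 x \<in> M\<close>, and \<open>M\<langle>s\<rangle>\<close> is generated by them;
  \<^item> if \<open>s\<close> is algebraic over \<open>M\<close>, differentiating a polynomial over \<open>M\<close> having \<open>s\<close> as a simple root
    (char 0) gives \<open>\<partial>\<^sub>i s \<in> M(s)\<close>, so \<open>M\<langle>s\<rangle> = M(s)\<close>;
  \<^item> if \<open>\<partial>\<^sub>0 s = a s\<close> with \<open>a \<in> M\<close>, the logarithmic derivatives \<open>u\<^sub>j = \<partial>\<^sub>j s / s\<close> satisfy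
    \<open>\<partial>\<^sub>0 u\<^sub>j = \<partial>\<^sub>j a \<in> M\<close>, so \<open>P = M\<langle>u\<^sub>0, \<dots>, u\<^sub>m\<rangle>\<close> is generated over \<open>M\<close> by elements whose
    \<open>\<partial>\<^sub>0\<close>-derivatives lie in \<open>M\<close>; and \<open>M\<langle>s\<rangle> = P(s)\<close>, because every derivative of \<open>s\<close> is
    \<open>s\<close> times an element of \<open>P\<close>.
  Padding the refined finite tower with trivial steps yields the infinite chain.
\<close>

section \<open>Subfields and derivations\<close>

lemma subfield_zero: "subfield F \<Longrightarrow> 0 \<in> F"
  by (simp add: subfield_def)
lemma subfield_one: "subfield F \<Longrightarrow> 1 \<in> F"
  by (simp add: subfield_def)
lemma subfield_add: "subfield F \<Longrightarrow> x \<in> F \<Longrightarrow> y \<in> F \<Longrightarrow> x + y \<in> F"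
  by (simp add: subfield_def)
lemma subfield_mult: "subfield F \<Longrightarrow> x \<in> F \<Longrightarrow> y \<in> F \<Longrightarrow> x * y \<in> F"
  by (simp add: subfield_def)
lemma subfield_uminus: "subfield F \<Longrightarrow> x \<in> F \<Longrightarrow> - x \<in> F"
  by (simp add: subfield_def)
lemma subfield_inverse: "subfield F \<Longrightarrow> x \<in> F \<Longrightarrow> inverse x \<in> F"
  by (simp add: subfield_def)
lemma subfield_divide: "subfield F \<Longrightarrow> x \<in> F \<Longrightarrow> y \<in> F \<Longrightarrow> x / y \<in> F"
  by (simp add: divide_inverse subfield_inverse subfield_mult)
lemma subfield_of_nat: "subfield F \<Longrightarrow> of_nat n \<in> F"
  by (induction n) (auto simp: subfield_zero subfield_one subfield_add)

lemma subfield_poly: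
  assumes F: "subfield F" and "\<forall>i. coeff p i \<in> F" and x: "x \<in> F"
  shows "poly p x \<in> F"
  using assms(2)
proof (induction p)
  case (pCons a p)
  then have "a \<in> F" "\<forall>i. coeff p i \<in> F"
    by (metis coeff_pCons_0, metis coeff_pCons_Suc)
  with pCons.IH show ?case
    using F x by (simp add: subfield_add subfield_mult)
qed (simp add: subfield_zero F)

lemma subfield_field_gen: "subfield (field_gen A T)"
  unfolding field_gen_def subfield_def by blast
lemma base_subset_field_gen: "A \<subseteq> field_gen A T"
  unfolding field_gen_def by blast
lemma gens_subset_field_gen: "T \<subseteq> field_gen A T"
  unfolding field_gen_def by blast
lemma field_gen_least: "subfield F \<Longrightarrow> A \<subseteq> F \<Longrightarrow> T \<subseteq> F \<Longrightarrow> field_gen A T \<subseteq> F"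
  unfolding field_gen_def by blast
lemma field_gen_eq_self: "subfield F \<Longrightarrow> T \<subseteq> F \<Longrightarrow> field_gen F T = F"
  by (meson base_subset_field_gen field_gen_least order_refl subset_antisym)

lemma delta_field_subfield: "delta_field m D L \<Longrightarrow> subfield L"
  by (simp add: delta_field_def)
lemma delta_field_D_closed: "delta_field m D L \<Longrightarrow> i \<le> m \<Longrightarrow> x \<in> L \<Longrightarrow> D i x \<in> L"
  by (simp add: delta_field_def)
lemma delta_field_D_add:
  "delta_field m D L \<Longrightarrow> i \<le> m \<Longrightarrow> x \<in> L \<Longrightarrow> y \<in> L \<Longrightarrow> D i (x + y) = D i x + D i y"
  by (simp add: delta_field_def)
lemma delta_field_D_mult:
  "delta_field m D L \<Longrightarrow> i \<le> m \<Longrightarrow> x \<in> L \<Longrightarrow> y \<in> L \<Longrightarrow> D i (x * y) = x * D i y + D i x * y"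
  by (simp add: delta_field_def)
lemma delta_field_D_commute:
  "delta_field m D L \<Longrightarrow> i \<le> m \<Longrightarrow> j \<le> m \<Longrightarrow> x \<in> L \<Longrightarrow> D i (D j x) = D j (D i x)"
  by (simp add: delta_field_def)

lemma delta_field_D_zero:
  assumes L: "delta_field m D L" and i: "i \<le> m"
  shows "D i 0 = 0"
proof -
  have z: "0 \<in> L" using subfield_zero[OF delta_field_subfield[OF L]] .
  have "D i (0 + 0) = D i 0 + D i 0" by (rule delta_field_D_add[OF L i z z])
  then show ?thesis by (metis add_0 add_cancel_right_right)
qed

lemma delta_field_D_one:
  assumes L: "delta_field m D L" and i: "i \<le> m"
  shows "D i 1 = 0"
proof -
  have u: "1 \<in> L" using subfield_one[OF delta_field_subfield[OF L]] .
  have "D i (1 * 1) = 1 * D i 1 + D i 1 * 1" by (rule delta_field_D_mult[OF L i u u])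
  then show ?thesis by (metis add_cancel_right_right mult_1 mult_1_right)
qed

lemma delta_field_D_uminus:
  assumes L: "delta_field m D L" and i: "i \<le> m" and x: "x \<in> L"
  shows "D i (- x) = - D i x"
proof -
  have "- x \<in> L" using L x by (simp add: subfield_uminus delta_field_subfield)
  then have "D i (x + - x) = D i x + D i (- x)" by (rule delta_field_D_add[OF L i x])
  then show ?thesis using delta_field_D_zero[OF L i] by (simp add: add_eq_0_iff)
qed

lemma delta_field_D_inverse:
  assumes L: "delta_field m D L" and i: "i \<le> m" and x: "x \<in> L"
  shows "D i (inverse x) = - D i x * inverse x * inverse x"
proof (cases "x = 0")
  case True
  then show ?thesis using delta_field_D_zero[OF L i] by simp
next
  case False
  have "inverse x \<in> L" using L x by (simp add: subfield_inverse delta_field_subfield)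
  then have "D i (x * inverse x) = x * D i (inverse x) + D i x * inverse x"
    by (rule delta_field_D_mult[OF L i x])
  then have "x * D i (inverse x) = - D i x * inverse x"
    using False delta_field_D_one[OF L i] by (simp add: eq_neg_iff_add_eq_0)
  then show ?thesis using False by (simp add: field_simps)
qed

lemma delta_field_D_log_deriv_commute:
  assumes L: "delta_field m D L" and "i \<le> m" "j \<le> m" and s: "s \<in> L"
  shows "D i (D j s / s) = D j (D i s / s)"
proof -
  have expand: "D i (D j s / s) = D i (D j s) * inverse s - D j s * D i s * inverse s * inverse s"
    if i: "i \<le> m" and j: "j \<le> m" for i j
  proof -
    have "D j s \<in> L" "inverse s \<in> L"
      using L s j by (simp_all add: delta_field_D_closed subfield_inverse delta_field_subfield)
    then show ?thesis
      unfolding divide_inverse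
      by (simp add: delta_field_D_mult[OF L i] delta_field_D_inverse[OF L i s] algebra_simps)
  qed
  have "D i (D j s / s) = D i (D j s) * inverse s - D j s * D i s * inverse s * inverse s"
    using expand[OF assms(2,3)] .
  also have "\<dots> = D j (D i s) * inverse s - D i s * D j s * inverse s * inverse s"
    using delta_field_D_commute[OF L assms(2,3) s] by (simp add: mult.commute)
  also have "\<dots> = D j (D i s / s)"
    using expand[OF assms(3,2)] by simp
  finally show ?thesis .
qed

lemma delta_field_field_gen:
  assumes L: "delta_field m D L" and AL: "A \<subseteq> L" and TL: "T \<subseteq> L"
    and closed: "\<And>i x. i \<le> m \<Longrightarrow> x \<in> A \<union> T \<Longrightarrow> D i x \<in> field_gen A T"
  shows "delta_field m D (field_gen A T)"
proof -
  let ?F = "field_gen A T"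
  have F: "subfield ?F" by (rule subfield_field_gen)
  have FL: "?F \<subseteq> L" using field_gen_least[OF delta_field_subfield[OF L] AL TL] .
  have "?F \<subseteq> {x \<in> ?F. D i x \<in> ?F}" if i: "i \<le> m" for i
  proof (rule field_gen_least)
    show "subfield {x \<in> ?F. D i x \<in> ?F}"
      unfolding subfield_def
    proof (intro conjI ballI)
      show "0 \<in> {x \<in> ?F. D i x \<in> ?F}" "1 \<in> {x \<in> ?F. D i x \<in> ?F}"
        using F delta_field_D_zero[OF L i] delta_field_D_one[OF L i]
        by (simp_all add: subfield_zero subfield_one)
    next
      fix x y assume x: "x \<in> {x \<in> ?F. D i x \<in> ?F}" and y: "y \<in> {x \<in> ?F. D i x \<in> ?F}"
      then have "x \<in> L" "y \<in> L" using FL by auto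
      then show "x + y \<in> {x \<in> ?F. D i x \<in> ?F}" "x * y \<in> {x \<in> ?F. D i x \<in> ?F}"
        using x y F delta_field_D_add[OF L i] delta_field_D_mult[OF L i]
        by (simp_all add: subfield_add subfield_mult)
    next
      fix x assume x: "x \<in> {x \<in> ?F. D i x \<in> ?F}"
      then have "x \<in> L" using FL by auto
      then show "- x \<in> {x \<in> ?F. D i x \<in> ?F}" "inverse x \<in> {x \<in> ?F. D i x \<in> ?F}"
        using x F delta_field_D_uminus[OF L i] delta_field_D_inverse[OF L i]
        by (simp_all add: subfield_uminus subfield_mult subfield_inverse)
    qed
    show "A \<subseteq> {x \<in> ?F. D i x \<in> ?F}" "T \<subseteq> {x \<in> ?F. D i x \<in> ?F}"
      using closed[OF i] base_subset_field_gen gens_subset_field_gen by blast+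
  qed
  then show ?thesis
    using L F FL unfolding delta_field_def by blast
qed

section \<open>Fields generated by an element and its derivatives\<close>

lemma derivs_subset_delta_field:
  assumes "delta_field m D F" and "t \<in> F"
  shows "derivs m D t \<subseteq> F"
proof
  fix x assume "x \<in> derivs m D t"
  then show "x \<in> F" by induction (use assms delta_field_D_closed in auto)
qed

lemma derivs_countable: "countable (derivs m D t)"
proof -
  have "derivs m D t \<subseteq> range (\<lambda>l. fold D l t)"
  proof
    fix x assume "x \<in> derivs m D t"
    then show "x \<in> range (\<lambda>l. fold D l t)"
    proof induction
      case self
      show ?case by (metis fold_Nil id_apply rangeI)
    next
      case (step x i)
      then obtain l where "x = fold D l t" by auto
      then have "D i x = fold D (l @ [i]) t" by simp
      then show ?case by blast
    qed
  qed
  then show ?thesis by (rule countable_subset) simp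
qed

lemma base_subset_delta_gen: "M \<subseteq> delta_gen m D M s"
  unfolding delta_gen_def by (rule base_subset_field_gen)

lemma mem_delta_gen: "s \<in> delta_gen m D M s"
  unfolding delta_gen_def by (rule subsetD[OF gens_subset_field_gen derivs.self])

lemma delta_gen_least:
  assumes "delta_field m D F" and "M \<subseteq> F" and "s \<in> F"
  shows "delta_gen m D M s \<subseteq> F"
  unfolding delta_gen_def
  using field_gen_least[OF delta_field_subfield[OF assms(1)] assms(2)]
    derivs_subset_delta_field[OF assms(1,3)] .

lemma D0_derivs_mem:
  assumes L: "delta_field m D L" and M: "delta_field m D M" and t: "t \<in> L" and "D 0 t \<in> M"
    and "x \<in> derivs m D t"
  shows "D 0 x \<in> M"
  using assms(5)
proof induction
  case self
  show ?case by (fact assms(4))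
next
  case (step x i)
  have "x \<in> L" using step.hyps(1) derivs_subset_delta_field[OF L t] by blast
  then have "D 0 (D i x) = D i (D 0 x)"
    using delta_field_D_commute[OF L _ step.hyps(2)] by simp
  then show ?case using delta_field_D_closed[OF M step.hyps(2) step.IH] by simp
qed

section \<open>Splitting a step of a liouvillian tower\<close>

definition liouv_seq_ext :: "(nat \<Rightarrow> 'a::field \<Rightarrow> 'a) \<Rightarrow> 'a set \<Rightarrow> 'a set \<Rightarrow> bool" where
  "liouv_seq_ext D M N \<longleftrightarrow>
     (\<exists>t :: nat \<Rightarrow> 'a. N = field_gen M (range t) \<and> (\<forall>j. liouv_elem D M (t j)))"

lemma liouv_seq_ext_countable:
  assumes "countable S" and "S \<noteq> {}" and "\<forall>x\<in>S. liouv_elem D M x"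
  shows "liouv_seq_ext D M (field_gen M S)"
  unfolding liouv_seq_ext_def
proof (intro exI conjI)
  show "field_gen M S = field_gen M (range (from_nat_into S))"
    using range_from_nat_into[OF assms(2,1)] by simp
  show "\<forall>j. liouv_elem D M (from_nat_into S j)"
    using assms(3) from_nat_into[OF assms(2)] by blast
qed

lemma liouv_seq_ext_singleton: "liouv_elem D M s \<Longrightarrow> liouv_seq_ext D M (field_gen M {s})"
  by (rule liouv_seq_ext_countable) auto

lemma algebraic_over_zero: "subfield M \<Longrightarrow> algebraic_over M 0"
  unfolding algebraic_over_def
  by (rule exI[of _ "[:0, 1:]"]) (auto simp: coeff_pCons subfield_zero subfield_one split: nat.split)

lemma liouv_seq_ext_refl: "subfield M \<Longrightarrow> liouv_seq_ext D M M"
  using liouv_seq_ext_singleton[of D M 0] field_gen_eq_self[of M "{0}"]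
  by (simp add: liouv_elem_def algebraic_over_zero subfield_zero)

lemma liouv_seq_ext_subset: "liouv_seq_ext D M N \<Longrightarrow> M \<subseteq> N"
  unfolding liouv_seq_ext_def using base_subset_field_gen by blast

lemma delta_field_D_poly:
  assumes L: "delta_field m D L" and M: "delta_field m D M" and sub: "M \<subseteq> L" and i: "i \<le> m"
    and x: "x \<in> L" and "\<forall>j. coeff p j \<in> M"
  shows "\<exists>q. (\<forall>j. coeff q j \<in> M) \<and> D i (poly p x) = poly q x + poly (pderiv p) x * D i x"
  using assms(6)
proof (induction p)
  case 0
  show ?case
    by (rule exI[of _ 0]) (simp add: delta_field_D_zero[OF L i] subfield_zero[OF delta_field_subfield[OF M]])
next
  case (pCons a p)
  have aM: "a \<in> M" and pM: "\<forall>j. coeff p j \<in> M"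
    using pCons.prems by (metis coeff_pCons_0, metis coeff_pCons_Suc)
  obtain q where qM: "\<forall>j. coeff q j \<in> M"
    and q: "D i (poly p x) = poly q x + poly (pderiv p) x * D i x"
    using pCons.IH[OF pM] by blast
  have pL: "poly p x \<in> L"
    using subfield_poly[OF delta_field_subfield[OF L]] pM sub x by blast
  have aL: "a \<in> L" using aM sub by blast
  have xpL: "x * poly p x \<in> L" using pL x subfield_mult[OF delta_field_subfield[OF L]] by blast
  have "D i (poly (pCons a p) x) = D i a + (x * D i (poly p x) + D i x * poly p x)"
    by (simp add: delta_field_D_add[OF L i aL xpL] delta_field_D_mult[OF L i x pL])
  also have "\<dots> = poly (pCons (D i a) q) x + poly (pderiv (pCons a p)) x * D i x"
    by (simp add: q pderiv_pCons algebra_simps)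
  finally have "D i (poly (pCons a p) x) =
      poly (pCons (D i a) q) x + poly (pderiv (pCons a p)) x * D i x" .
  moreover have "\<forall>j. coeff (pCons (D i a) q) j \<in> M"
    using qM delta_field_D_closed[OF M i aM] by (simp add: coeff_pCons split: nat.split)
  ultimately show ?case by (intro exI[of _ "pCons (D i a) q"]) simp
qed

lemma coeff_pderiv_mem:
  assumes "subfield M" and "\<forall>j. coeff p j \<in> M"
  shows "\<forall>j. coeff (pderiv p) j \<in> M"
  unfolding coeff_pderiv using assms subfield_mult subfield_of_nat by blast

lemma algebraic_over_simple_root:
  fixes s :: "'a::field_char_0"
  assumes M: "subfield M" and "algebraic_over M s"
  obtains p where "\<forall>j. coeff p j \<in> M" "poly p s = 0" "poly (pderiv p) s \<noteq> 0"
proof -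
  let ?P = "\<lambda>n. \<exists>p. degree p = n \<and> p \<noteq> 0 \<and> (\<forall>j. coeff p j \<in> M) \<and> poly p s = 0"
  obtain n where "?P n" and minimal: "\<And>k. k < n \<Longrightarrow> \<not> ?P k"
    using assms(2) exists_least_iff[of ?P] unfolding algebraic_over_def by blast
  then obtain p where deg: "degree p = n" and "p \<noteq> 0" and pM: "\<forall>j. coeff p j \<in> M"
    and root: "poly p s = 0" by blast
  have "n \<noteq> 0"
  proof
    assume "n = 0"
    then have const: "p = [:coeff p 0:]" using deg by (metis degree_0_id)
    then have "poly [:coeff p 0:] s = 0" using root by simp
    then have "coeff p 0 = 0" by simp
    with const \<open>p \<noteq> 0\<close> show False by simp
  qed
  then have "pderiv p \<noteq> 0" and "degree (pderiv p) < n"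
    using deg by (simp_all add: pderiv_eq_0_iff degree_pderiv)
  moreover have "\<forall>j. coeff (pderiv p) j \<in> M" by (rule coeff_pderiv_mem[OF M pM])
  ultimately have "poly (pderiv p) s \<noteq> 0" using minimal[of "degree (pderiv p)"] by blast
  with pM root show ?thesis by (rule that)
qed

lemma algebraic_D_mem_field_gen:
  fixes D :: "nat \<Rightarrow> 'a::field_char_0 \<Rightarrow> 'a"
  assumes L: "delta_field m D L" and M: "delta_field m D M" and sub: "M \<subseteq> L" and i: "i \<le> m"
    and s: "s \<in> L" and alg: "algebraic_over M s"
  shows "D i s \<in> field_gen M {s}"
proof -
  obtain p where pM: "\<forall>j. coeff p j \<in> M" and root: "poly p s = 0"
    and simple: "poly (pderiv p) s \<noteq> 0"
    using algebraic_over_simple_root[OF delta_field_subfield[OF M] alg] by blast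
  obtain q where qM: "\<forall>j. coeff q j \<in> M"
    and q: "D i (poly p s) = poly q s + poly (pderiv p) s * D i s"
    using delta_field_D_poly[OF L M sub i s pM] by blast
  have "poly q s + poly (pderiv p) s * D i s = 0"
    using q root delta_field_D_zero[OF L i] by simp
  then have Ds: "D i s = - poly q s / poly (pderiv p) s"
    using simple by (simp add: field_simps eq_neg_iff_add_eq_0)
  let ?F = "field_gen M {s}"
  have F: "subfield ?F" by (rule subfield_field_gen)
  have MF: "M \<subseteq> ?F" and sF: "s \<in> ?F"
    using base_subset_field_gen[of M "{s}"] gens_subset_field_gen[of "{s}" M] by blast+
  have "poly q s \<in> ?F"
    using subfield_poly[OF F] qM MF sF by blast
  moreover have "poly (pderiv p) s \<in> ?F"
    using subfield_poly[OF F] coeff_pderiv_mem[OF delta_field_subfield[OF M] pM] MF sF by blast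
  ultimately
  show ?thesis unfolding Ds using F by (simp add: subfield_divide subfield_uminus)
qed

lemma delta_gen_algebraic:
  fixes D :: "nat \<Rightarrow> 'a::field_char_0 \<Rightarrow> 'a"
  assumes M: "delta_field m D M" and N: "delta_field m D (delta_gen m D M s)"
    and alg: "algebraic_over M s"
  shows "delta_gen m D M s = field_gen M {s}"
proof
  let ?N = "delta_gen m D M s" and ?F = "field_gen M {s}"
  have sN: "s \<in> ?N" and MN: "M \<subseteq> ?N" by (rule mem_delta_gen, rule base_subset_delta_gen)
  show "?F \<subseteq> ?N"
    using field_gen_least[OF delta_field_subfield[OF N] MN] sN by blast
  have "delta_field m D ?F"
  proof (rule delta_field_field_gen[OF N MN])
    show "{s} \<subseteq> ?N" using sN by blast
    show "D i x \<in> ?F" if "i \<le> m" and "x \<in> M \<union> {s}" for i x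
      using that algebraic_D_mem_field_gen[OF N M MN that(1) sN alg]
        delta_field_D_closed[OF M that(1)] base_subset_field_gen[of M "{s}"] by blast
  qed
  then show "?N \<subseteq> ?F"
    by (rule delta_gen_least) (use base_subset_field_gen gens_subset_field_gen in blast)+
qed

lemma liouv_seq_ext_delta_gen_integral:
  assumes M: "delta_field m D M" and N: "delta_field m D (delta_gen m D M s)" and "D 0 s \<in> M"
  shows "liouv_seq_ext D M (delta_gen m D M s)"
  unfolding delta_gen_def
proof (rule liouv_seq_ext_countable)
  show "countable (derivs m D s)" by (rule derivs_countable)
  show "derivs m D s \<noteq> {}" using derivs.self[of s m D] by blast
  show "\<forall>x\<in>derivs m D s. liouv_elem D M x"
    using D0_derivs_mem[OF N M mem_delta_gen assms(3)] unfolding liouv_elem_def by blast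
qed

lemma derivs_divide_mem:
  assumes L: "delta_field m D L" and P: "delta_field m D P" and PL: "P \<subseteq> L"
    and s: "s \<in> L" "s \<noteq> 0" and log_derivs: "\<And>j. j \<le> m \<Longrightarrow> D j s / s \<in> P"
    and "x \<in> derivs m D s"
  shows "x / s \<in> P"
  using assms(7)
proof induction
  case self
  show ?case using s(2) subfield_one[OF delta_field_subfield[OF P]] by simp
next
  case (step x i)
  define c where "c = x / s"
  have cP: "c \<in> P" using step.IH c_def by simp
  then have "c \<in> L" using PL by blast
  moreover have "x = c * s" using s(2) c_def by simp
  ultimately have "D i x = c * D i s + D i c * s"
    using delta_field_D_mult[OF L step.hyps(2) _ s(1)] by simp
  then have "D i x / s = c * (D i s / s) + D i c"
    using s(2) by (simp add: field_simps)
  then show ?case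
    using cP log_derivs[OF step.hyps(2)] delta_field_D_closed[OF P step.hyps(2) cP]
      delta_field_subfield[OF P] by (metis subfield_add subfield_mult)
qed

lemma delta_gen_eq_field_gen_of_log_derivs:
  assumes N: "delta_field m D (delta_gen m D M s)" and P: "delta_field m D P"
    and MP: "M \<subseteq> P" and PN: "P \<subseteq> delta_gen m D M s" and s: "s \<noteq> 0"
    and log_derivs: "\<And>j. j \<le> m \<Longrightarrow> D j s / s \<in> P"
  shows "delta_gen m D M s = field_gen P {s}"
proof
  let ?N = "delta_gen m D M s" and ?G = "field_gen P {s}"
  have sN: "s \<in> ?N" by (rule mem_delta_gen)
  show "?G \<subseteq> ?N"
    using field_gen_least[OF delta_field_subfield[OF N] PN] sN by blast
  have G: "subfield ?G" by (rule subfield_field_gen)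
  have PG: "P \<subseteq> ?G" and sG: "s \<in> ?G"
    using base_subset_field_gen[of P "{s}"] gens_subset_field_gen[of "{s}" P] by blast+
  have "derivs m D s \<subseteq> ?G"
  proof
    fix x assume "x \<in> derivs m D s"
    then have "x / s \<in> ?G"
      using derivs_divide_mem[OF N P PN sN s log_derivs] PG by blast
    then have "x / s * s \<in> ?G" using subfield_mult[OF G _ sG] by blast
    then show "x \<in> ?G" using s by simp
  qed
  then show "?N \<subseteq> ?G"
    unfolding delta_gen_def using field_gen_least[OF G] MP PG by blast
qed

lemma liouv_seq_ext_delta_gen_exponential:
  assumes M: "delta_field m D M" and N: "delta_field m D (delta_gen m D M s)"
    and s: "s \<noteq> 0" and a: "D 0 s / s \<in> M"
  obtains P where "liouv_seq_ext D M P" and "liouv_seq_ext D P (delta_gen m D M s)"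
proof -
  let ?N = "delta_gen m D M s"
  define T where "T = (\<Union>j\<le>m. derivs m D (D j s / s))"
  define P where "P = field_gen M T"
  have sN: "s \<in> ?N" and MN: "M \<subseteq> ?N" by (rule mem_delta_gen, rule base_subset_delta_gen)
  have log_derivs_N: "D j s / s \<in> ?N" if "j \<le> m" for j
    using subfield_divide[OF delta_field_subfield[OF N] delta_field_D_closed[OF N that sN] sN] .
  have TN: "T \<subseteq> ?N"
    unfolding T_def using derivs_subset_delta_field[OF N log_derivs_N] by blast
  have MP: "M \<subseteq> P" and TP: "T \<subseteq> P"
    unfolding P_def by (rule base_subset_field_gen, rule gens_subset_field_gen)
  have "liouv_seq_ext D M P"
    unfolding P_def
  proof (rule liouv_seq_ext_countable)
    show "countable T" unfolding T_def by (simp add: derivs_countable)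
    show "T \<noteq> {}" unfolding T_def using derivs.self[of "D 0 s / s" m D] by blast
    have "D 0 (D j s / s) \<in> M" if "j \<le> m" for j
      using delta_field_D_log_deriv_commute[OF N _ that sN] delta_field_D_closed[OF M that a] by simp
    then show "\<forall>x\<in>T. liouv_elem D M x"
      unfolding T_def liouv_elem_def using D0_derivs_mem[OF N M log_derivs_N] by blast
  qed
  moreover have "liouv_seq_ext D P ?N"
  proof -
    have "delta_field m D P"
      unfolding P_def
    proof (rule delta_field_field_gen[OF N MN TN])
      show "D i x \<in> field_gen M T" if "i \<le> m" and "x \<in> M \<union> T" for i x
        using that delta_field_D_closed[OF M that(1)] derivs.step[of _ m D _ i] MP TP
        unfolding T_def P_def by blast
    qed
    moreover have "P \<subseteq> ?N"
      unfolding P_def by (rule field_gen_least[OF delta_field_subfield[OF N] MN TN])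
    moreover have "D j s / s \<in> P" if "j \<le> m" for j
      using that derivs.self[of "D j s / s" m D] TP unfolding T_def by blast
    ultimately have "?N = field_gen P {s}"
      using delta_gen_eq_field_gen_of_log_derivs[OF N _ MP _ s] by blast
    moreover have "liouv_elem D P s" using s a MP unfolding liouv_elem_def by blast
    ultimately show ?thesis using liouv_seq_ext_singleton by metis
  qed
  ultimately show ?thesis by (rule that)
qed

lemma delta_gen_liouv_two_steps:
  fixes D :: "nat \<Rightarrow> 'a::field_char_0 \<Rightarrow> 'a"
  assumes M: "delta_field m D M" and N: "delta_field m D (delta_gen m D M s)"
    and "liouv_elem D M s"
  shows "\<exists>P. liouv_seq_ext D M P \<and> liouv_seq_ext D P (delta_gen m D M s)"
  using assms(3) unfolding liouv_elem_def
proof (elim disjE conjE)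
  assume "D 0 s \<in> M"
  then show ?thesis
    using liouv_seq_ext_delta_gen_integral[OF M N] liouv_seq_ext_refl delta_field_subfield[OF N]
    by blast
next
  assume "s \<noteq> 0" and "D 0 s / s \<in> M"
  then show ?thesis
    using liouv_seq_ext_delta_gen_exponential[OF M N] by metis
next
  assume "algebraic_over M s"
  then show ?thesis
    using delta_gen_algebraic[OF M N] liouv_seq_ext_singleton[of D M s] liouv_seq_ext_refl
      delta_field_subfield[OF N] unfolding liouv_elem_def by metis
qed

section \<open>Towers\<close>

lemma tower_refine:
  assumes "\<And>i. i < r \<Longrightarrow> \<exists>P. R (Ms i) P \<and> R P (Ms (Suc i))"
  obtains Ns where "Ns 0 = Ms 0" and "Ns (2 * r) = Ms r" and "\<forall>i<2 * r. R (Ns i) (Ns (Suc i))"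
proof -
  obtain Pf where Pf: "\<And>i. i < r \<Longrightarrow> R (Ms i) (Pf i) \<and> R (Pf i) (Ms (Suc i))"
    using assms by metis
  define Ns where "Ns n = (if even n then Ms (n div 2) else Pf (n div 2))" for n
  have "R (Ns n) (Ns (Suc n))" if "n < 2 * r" for n
  proof (cases "even n")
    case True
    then obtain q where "n = 2 * q" by (rule evenE)
    then show ?thesis using Pf[of q] that unfolding Ns_def by auto
  next
    case False
    then obtain q where "n = 2 * q + 1" by (rule oddE)
    then show ?thesis using Pf[of q] that unfolding Ns_def by auto
  qed
  moreover have "Ns 0 = Ms 0" and "Ns (2 * r) = Ms r" by (simp_all add: Ns_def)
  ultimately show ?thesis using that by blast
qed

lemma tower_extend:
  assumes steps: "\<forall>i<n. R (Ns i) (Ns (Suc i))" and refl: "R (Ns n) (Ns n)"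
    and mono: "\<And>M N. R M N \<Longrightarrow> M \<subseteq> N"
  obtains Ls where "Ls 0 = Ns 0" and "\<forall>i. R (Ls i) (Ls (Suc i))" and "(\<Union>i. Ls i) = Ns n"
proof -
  define Ls where "Ls i = Ns (min i n)" for i
  have R: "R (Ls i) (Ls (Suc i))" for i
    by (cases "i < n") (use refl steps in \<open>auto simp: Ls_def min_def\<close>)
  have "Ls i \<subseteq> Ls (i + n)" for i
    by (rule lift_Suc_mono_le[of Ls]) (use R mono in auto)
  then have "(\<Union>i. Ls i) \<subseteq> Ns n" by (auto simp: Ls_def)
  moreover have "Ns n \<subseteq> (\<Union>i. Ls i)" using Ls_def[of n] by auto
  moreover have "Ls 0 = Ns 0" by (simp add: Ls_def)
  ultimately show ?thesis using R that by blast
qed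

lemma param_liouvillian_liouv_seq_ext_tower:
  fixes D :: "nat \<Rightarrow> 'a::field_char_0 \<Rightarrow> 'a"
  assumes "param_liouvillian m D k L"
  obtains Ns n where "Ns 0 = k" and "Ns n = L" and "\<forall>i<n. liouv_seq_ext D (Ns i) (Ns (Suc i))"
proof -
  obtain r Ms s where Ms0: "Ms 0 = k" and Msr: "Ms r = L"
    and fields: "\<forall>i\<le>r. delta_field m D (Ms i)"
    and steps: "\<forall>i<r. Ms i \<subseteq> Ms (Suc i) \<and> Ms (Suc i) = delta_gen m D (Ms i) (s (Suc i)) \<and>
                     liouv_elem D (Ms i) (s (Suc i))"
    using assms unfolding param_liouvillian_def by blast
  have "\<exists>P. liouv_seq_ext D (Ms i) P \<and> liouv_seq_ext D P (Ms (Suc i))" if "i < r" for i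
  proof -
    have eq: "Ms (Suc i) = delta_gen m D (Ms i) (s (Suc i))"
      and liouv: "liouv_elem D (Ms i) (s (Suc i))" using steps that by simp_all
    have M: "delta_field m D (Ms i)" and N: "delta_field m D (Ms (Suc i))"
      using fields that by simp_all
    show ?thesis using delta_gen_liouv_two_steps[OF M N[unfolded eq] liouv] eq by simp
  qed
  then obtain Ns where "Ns 0 = Ms 0" and "Ns (2 * r) = Ms r"
    and "\<forall>i<2 * r. liouv_seq_ext D (Ns i) (Ns (Suc i))"
    by (rule tower_refine)
  then show ?thesis using that Ms0 Msr by blast
qed

theorem lemma9p14:
  fixes m :: nat and D :: "nat \<Rightarrow> 'a::field_char_0 \<Rightarrow> 'a" and k L :: "'a set"
  assumes "delta_field m D k"
    and "param_liouvillian m D k L"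
  shows "\<exists>(Ls :: nat \<Rightarrow> 'a set) (t :: nat \<Rightarrow> nat \<Rightarrow> 'a).
           Ls 0 = k \<and> (\<forall>i. Ls i \<subseteq> Ls (Suc i)) \<and> L = (\<Union>i. Ls i) \<and>
           (\<forall>i. Ls (Suc i) = field_gen (Ls i) (range (t i))) \<and>
           (\<forall>i j. liouv_elem D (Ls i) (t i j))"
proof -
  obtain Ns n where Ns0: "Ns 0 = k" and Nsn: "Ns n = L"
    and steps: "\<forall>i<n. liouv_seq_ext D (Ns i) (Ns (Suc i))"
    using param_liouvillian_liouv_seq_ext_tower[OF assms(2)] by blast
  have "liouv_seq_ext D L L"
    using assms(2) unfolding param_liouvillian_def
    by (blast intro: liouv_seq_ext_refl delta_field_subfield)
  with steps obtain Ls where Ls0: "Ls 0 = Ns 0"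
    and ext: "\<forall>i. liouv_seq_ext D (Ls i) (Ls (Suc i))" and union: "(\<Union>i. Ls i) = Ns n"
    using liouv_seq_ext_subset unfolding Nsn[symmetric] by (rule tower_extend)
  from choice[OF ext[unfolded liouv_seq_ext_def]] obtain t :: "nat \<Rightarrow> nat \<Rightarrow> 'a"
    where t: "\<forall>i. Ls (Suc i) = field_gen (Ls i) (range (t i)) \<and> (\<forall>j. liouv_elem D (Ls i) (t i j))"
    by (rule exE)
  have "\<forall>i. Ls i \<subseteq> Ls (Suc i)" using ext liouv_seq_ext_subset by blast
  then show ?thesis
    by (intro exI[of _ Ls] exI[of _ t]) (use Ls0 Ns0 union Nsn t in auto)
qed

end
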